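(* Let $G$ be a connected graph with a fixed vertex $w$. Take a cycle $C_c$ of length $c \geq 7$, vertex-disjoint from $G$, and identify one vertex of the cycle with $w$; denote the resulting graph by $G^*$. Let $v_1$ be a neighbor of $w$ on the cycle $C_c$. Then $\delta_{G^*}(w) = t_{G^*}(w) - t_{G^*-v_1}(w)\leq -2$.
   Context: All graphs are finite, simple, undirected. For a graph $H$ and vertex $x$, the transmission is $t_H(x)=\sum_{y\in V(H)}\mathrm{dist}_H(x,y)$; $H-v$ denotes $H$ with vertex $v$ and its incident edges deleted. The quantity $\delta_{G^*}(w)$ is taken with respect to the vertex $v_1$, i.e. $\delta_{G^*}(w)=t_{G^*}(w)-t_{G^*-v_1}(w)$. *)

theory Defs
  imports Main
begin

definition simple_graph :: "'a set \<Rightarrow> 'a set set \<Rightarrow> bool" where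
  "simple_graph V E \<longleftrightarrow> finite V \<and>
     (\<forall>e\<in>E. \<exists>x y. e = {x, y} \<and> x \<noteq> y \<and> x \<in> V \<and> y \<in> V)"

definition walk :: "'a set \<Rightarrow> 'a set set \<Rightarrow> 'a list \<Rightarrow> bool" where
  "walk V E xs \<longleftrightarrow> xs \<noteq> [] \<and> set xs \<subseteq> V \<and>
     (\<forall>i. Suc i < length xs \<longrightarrow> {xs ! i, xs ! Suc i} \<in> E)"

definition connected_graph :: "'a set \<Rightarrow> 'a set set \<Rightarrow> bool" where
  "connected_graph V E \<longleftrightarrow> V \<noteq> {} \<and>
     (\<forall>x\<in>V. \<forall>y\<in>V. \<exists>xs. walk V E xs \<and> hd xs = x \<and> last xs = y)"

definition dist :: "'a set \<Rightarrow> 'a set set \<Rightarrow> 'a \<Rightarrow> 'a \<Rightarrow> nat" where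
  "dist V E x y = (LEAST n. \<exists>xs. walk V E xs \<and> hd xs = x \<and> last xs = y \<and> length xs = Suc n)"

definition transmission :: "'a set \<Rightarrow> 'a set set \<Rightarrow> 'a \<Rightarrow> nat" where
  "transmission V E x = (\<Sum>y\<in>V. dist V E x y)"

definition del_vertex_V :: "'a set \<Rightarrow> 'a \<Rightarrow> 'a set" where
  "del_vertex_V V v = V - {v}"

definition del_vertex_E :: "'a set set \<Rightarrow> 'a \<Rightarrow> 'a set set" where
  "del_vertex_E E v = {e \<in> E. v \<notin> e}"

text \<open>Gluing a cycle of length c at w: the cycle is w = cyc 0, u 1, ..., u (c-1), back to w.\<close>
definition cyc :: "'a \<Rightarrow> (nat \<Rightarrow> 'a) \<Rightarrow> nat \<Rightarrow> 'a" where
  "cyc w u i = (if i = 0 then w else u i)"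

definition glue_V :: "'a set \<Rightarrow> (nat \<Rightarrow> 'a) \<Rightarrow> nat \<Rightarrow> 'a set" where
  "glue_V V u c = V \<union> u ` {1..<c}"

definition glue_E :: "'a set set \<Rightarrow> 'a \<Rightarrow> (nat \<Rightarrow> 'a) \<Rightarrow> nat \<Rightarrow> 'a set set" where
  "glue_E E w u c = E \<union> {{cyc w u i, cyc w u (Suc i mod c)} | i. i < c}"

end

theory Submission
  imports Defs
begin

text \<open>Deleting the cycle neighbour \<open>v\<^sub>1\<close> of \<open>w\<close> removes the summand \<open>d(w, v\<^sub>1) = 1\<close> from the
transmission of \<open>w\<close> and shortens no other distance. It lengthens one: the cycle vertex \<open>x\<close> two
steps from \<open>w\<close> through \<open>v\<^sub>1\<close> was at distance 2, but in \<open>G\<^sup>* - v\<^sub>1\<close> it can only be reached the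
other way round the cycle, at distance \<open>c - 2\<close>. Hence \<open>\<delta>(w) \<le> 1 + 2 - (c - 2) = 5 - c \<le> -2\<close>.\<close>

definition reachable :: "'a set \<Rightarrow> 'a set set \<Rightarrow> 'a \<Rightarrow> 'a \<Rightarrow> bool" where
  "reachable V E x y \<longleftrightarrow> (\<exists>xs. walk V E xs \<and> hd xs = x \<and> last xs = y)"

lemma dist_le_walk:
  assumes "walk V E xs" "hd xs = x" "last xs = y" "length xs = Suc n"
  shows "dist V E x y \<le> n"
  unfolding dist_def by (rule Least_le) (use assms in blast)

lemma reachable_shortest_walk:
  assumes "reachable V E x y"
  obtains xs where "walk V E xs" "hd xs = x" "last xs = y" "length xs = Suc (dist V E x y)"
proof -
  from assms obtain xs where xs: "walk V E xs" "hd xs = x" "last xs = y"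
    unfolding reachable_def by blast
  then have "length xs = Suc (length xs - 1)" unfolding walk_def by (cases xs) auto
  with xs have "\<exists>n xs. walk V E xs \<and> hd xs = x \<and> last xs = y \<and> length xs = Suc n" by blast
  then have "\<exists>xs. walk V E xs \<and> hd xs = x \<and> last xs = y \<and> length xs = Suc (dist V E x y)"
    unfolding dist_def by (rule LeastI_ex)
  then show thesis using that by blast
qed

lemma walk_mono:
  assumes "walk V E xs" "V \<subseteq> V'" "E \<subseteq> E'"
  shows "walk V' E' xs"
  using assms unfolding walk_def by blast

lemma reachable_mono:
  assumes "reachable V E x y" "V \<subseteq> V'" "E \<subseteq> E'"
  shows "reachable V' E' x y"
  using assms walk_mono unfolding reachable_def by blast

lemma dist_subgraph_le:
  assumes "reachable V' E' x y" "V' \<subseteq> V" "E' \<subseteq> E"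
  shows "dist V E x y \<le> dist V' E' x y"
proof -
  obtain xs where xs: "walk V' E' xs" "hd xs = x" "last xs = y" "length xs = Suc (dist V' E' x y)"
    using reachable_shortest_walk[OF assms(1)] .
  show ?thesis using dist_le_walk[OF walk_mono[OF xs(1) assms(2,3)] xs(2-4)] .
qed

lemma walk_rev:
  assumes "walk V E xs"
  shows "walk V E (rev xs)"
  unfolding walk_def
proof (intro conjI allI impI)
  show "rev xs \<noteq> []" "set (rev xs) \<subseteq> V" using assms unfolding walk_def by auto
  fix i assume i: "Suc i < length (rev xs)"
  define j where "j = length xs - Suc (Suc i)"
  have "Suc j < length xs" "rev xs ! i = xs ! Suc j" "rev xs ! Suc i = xs ! j"
    using i by (auto simp: j_def rev_nth Suc_diff_Suc)
  then show "{rev xs ! i, rev xs ! Suc i} \<in> E"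
    using assms unfolding walk_def by (metis insert_commute)
qed

lemma dist_commute: "dist V E x y = dist V E y x"
proof -
  have rev_walk: "walk V E (rev xs) \<and> hd (rev xs) = y \<and> last (rev xs) = x \<and> length (rev xs) = Suc n"
    if "walk V E xs \<and> hd xs = x \<and> last xs = y \<and> length xs = Suc n" for xs x y n
    using that walk_rev[of V E xs] by (auto simp: hd_rev last_rev)
  have "(\<exists>xs. walk V E xs \<and> hd xs = x \<and> last xs = y \<and> length xs = Suc n) \<longleftrightarrow>
        (\<exists>xs. walk V E xs \<and> hd xs = y \<and> last xs = x \<and> length xs = Suc n)" for n
    using rev_walk by blast
  then show ?thesis unfolding dist_def by simp
qed

lemma walk_path:
  assumes "\<And>k. k \<le> n \<Longrightarrow> p k \<in> V" "\<And>k. k < n \<Longrightarrow> {p k, p (Suc k)} \<in> E"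
  shows "walk V E (map p [0..<Suc n])"
  unfolding walk_def
proof (intro conjI allI impI)
  show "map p [0..<Suc n] \<noteq> []" "set (map p [0..<Suc n]) \<subseteq> V"
    using assms(1) by (auto simp del: upt_Suc)
  fix i assume "Suc i < length (map p [0..<Suc n])"
  then show "{map p [0..<Suc n] ! i, map p [0..<Suc n] ! Suc i} \<in> E"
    using assms(2)[of i] by (simp del: upt_Suc add: nth_upt)
qed

lemma hd_last_path: "hd (map p [0..<Suc n]) = p 0" "last (map p [0..<Suc n]) = p n"
  by (subst upt_conv_Cons) simp_all

lemma dist_path_le:
  assumes "\<And>k. k \<le> n \<Longrightarrow> p k \<in> V" "\<And>k. k < n \<Longrightarrow> {p k, p (Suc k)} \<in> E"
  shows "dist V E (p 0) (p n) \<le> n"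
proof -
  have "walk V E (map p [0..<Suc n])" using assms by (rule walk_path)
  then show ?thesis by (rule dist_le_walk[OF _ hd_last_path]) simp
qed

lemma reachable_path:
  assumes "\<And>k. k \<le> n \<Longrightarrow> p k \<in> V" "\<And>k. k < n \<Longrightarrow> {p k, p (Suc k)} \<in> E"
  shows "reachable V E (p 0) (p n)"
proof -
  have "walk V E (map p [0..<Suc n])" using assms by (rule walk_path)
  then show ?thesis unfolding reachable_def using hd_last_path by blast
qed

lemma walk_Cons_Cons:
  "walk V E (x # y # xs) \<longleftrightarrow> x \<in> V \<and> {x, y} \<in> E \<and> walk V E (y # xs)"
  unfolding walk_def by (auto simp: All_less_Suc2)

lemma walk_potential:
  fixes f :: "'a \<Rightarrow> int"
  assumes "walk V E xs" "\<And>a b. {a, b} \<in> E \<Longrightarrow> \<bar>f a - f b\<bar> \<le> 1"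
  shows "\<bar>f (last xs) - f (hd xs)\<bar> \<le> int (length xs) - 1"
  using assms(1)
proof (induction xs rule: induct_list012)
  case (3 x y zs)
  then have "\<bar>f x - f y\<bar> \<le> 1" "\<bar>f (last (y # zs)) - f y\<bar> \<le> int (length (y # zs)) - 1"
    using assms(2) by (auto simp: walk_Cons_Cons)
  then show ?case by simp
qed (simp_all add: walk_def)

lemma dist_ge_potential:
  fixes f :: "'a \<Rightarrow> int"
  assumes "reachable V E x y" "\<And>a b. {a, b} \<in> E \<Longrightarrow> \<bar>f a - f b\<bar> \<le> 1"
  shows "\<bar>f y - f x\<bar> \<le> int (dist V E x y)"
proof -
  obtain xs where "walk V E xs" "hd xs = x" "last xs = y" "length xs = Suc (dist V E x y)"
    using reachable_shortest_walk[OF assms(1)] .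
  with walk_potential[OF _ assms(2)] show ?thesis by fastforce
qed

lemma transmission_delete_vertex_le:
  assumes "finite V" "v \<in> V" "x \<in> V" "x \<noteq> v" "E' \<subseteq> E"
    and "\<And>y. y \<in> V - {v} \<Longrightarrow> reachable (V - {v}) E' w y"
  shows "int (transmission V E w) - int (transmission (V - {v}) E' w)
         \<le> int (dist V E w v) + int (dist V E w x) - int (dist (V - {v}) E' w x)"
proof -
  let ?d = "dist V E w" and ?d' = "dist (V - {v}) E' w" and ?R = "V - {v} - {x}"
  have "transmission V E w = ?d v + ?d x + sum ?d ?R"
    unfolding transmission_def using assms(1-4)
    by (simp add: sum.remove[of V v] sum.remove[of "V - {v}" x])
  moreover have "transmission (V - {v}) E' w = ?d' x + sum ?d' ?R"
    unfolding transmission_def using assms(1-4) by (simp add: sum.remove[of "V - {v}" x])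
  moreover have "sum ?d ?R \<le> sum ?d' ?R"
    by (rule sum_mono, rule dist_subgraph_le) (use assms(5,6) in auto)
  ultimately show ?thesis by linarith
qed

locale glued_cycle =
  fixes V :: "'a set" and E :: "'a set set" and w :: 'a and u :: "nat \<Rightarrow> 'a" and c :: nat
  assumes simple: "simple_graph V E" and connected: "connected_graph V E" and w_V: "w \<in> V"
    and c_ge_3: "c \<ge> 3" and inj: "inj_on u {1..<c}" and disjoint: "u ` {1..<c} \<inter> V = {}"
begin

abbreviation "glued_V \<equiv> glue_V V u c"
abbreviation "glued_E \<equiv> glue_E E w u c"
abbreviation "deleted_V \<equiv> glued_V - {u (c - 1)}"
abbreviation "deleted_E \<equiv> del_vertex_E glued_E (u (c - 1))"

lemma edge_subset: "e \<in> E \<Longrightarrow> e \<subseteq> V"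
  using simple unfolding simple_graph_def by auto

lemma u_notin_V: "i \<in> {1..<c} \<Longrightarrow> u i \<notin> V"
  using disjoint by blast

lemma cyc_in_V_iff: "i < c \<Longrightarrow> cyc w u i \<in> V \<longleftrightarrow> i = 0"
  using u_notin_V[of i] w_V by (cases "i = 0") (auto simp: cyc_def)

lemma cyc_in_glued_V: "i < c \<Longrightarrow> cyc w u i \<in> glued_V"
  using w_V by (cases "i = 0") (auto simp: cyc_def glue_V_def)

lemma cyc_eq_iff: "i < c \<Longrightarrow> j < c \<Longrightarrow> cyc w u i = cyc w u j \<longleftrightarrow> i = j"
proof
  assume "i < c" "j < c" and eq: "cyc w u i = cyc w u j"
  then have "i = 0 \<longleftrightarrow> j = 0" using cyc_in_V_iff by metis
  then show "i = j" using eq \<open>i < c\<close> \<open>j < c\<close> inj_on_eq_iff[OF inj, of i j] by (auto simp: cyc_def)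
qed simp

lemma cyc_last: "cyc w u (c - 1) = u (c - 1)"
  using c_ge_3 by (simp add: cyc_def)

lemma cyc_ne_last: "k < c - 1 \<Longrightarrow> cyc w u k \<noteq> u (c - 1)"
  using cyc_eq_iff[of k "c - 1"] cyc_last c_ge_3 by simp

lemma cyc_edge_in_glued_E: "i < c \<Longrightarrow> {cyc w u i, cyc w u (Suc i mod c)} \<in> glued_E"
  unfolding glue_E_def by blast

lemma E_subset_deleted_E: "E \<subseteq> deleted_E"
proof
  fix e assume "e \<in> E"
  moreover have "u (c - 1) \<notin> V" using cyc_in_V_iff[of "c - 1"] cyc_last c_ge_3 by simp
  ultimately show "e \<in> deleted_E"
    using edge_subset by (auto simp: del_vertex_E_def glue_E_def)
qed

lemma dist_glued_cyc: "0 < i \<Longrightarrow> i < c \<Longrightarrow> dist glued_V glued_E w (cyc w u i) \<le> c - i"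
proof -
  assume i: "0 < i" "i < c"
  have "dist glued_V glued_E (cyc w u ((i + 0) mod c)) (cyc w u ((i + (c - i)) mod c)) \<le> c - i"
    by (rule dist_path_le[where p = "\<lambda>k. cyc w u ((i + k) mod c)"])
      (use i cyc_edge_in_glued_E cyc_in_glued_V in \<open>auto simp: mod_Suc_eq\<close>)
  then show ?thesis using i by (simp add: dist_commute cyc_def)
qed

lemma reachable_deleted_cyc:
  assumes "j \<le> c - 2"
  shows "reachable deleted_V deleted_E w (cyc w u j)"
proof -
  have "reachable deleted_V deleted_E (cyc w u 0) (cyc w u j)"
  proof (rule reachable_path)
    fix k assume "k \<le> j"
    then show "cyc w u k \<in> deleted_V"
      using cyc_in_glued_V[of k] cyc_ne_last[of k] assms c_ge_3 by simp
  next
    fix k assume "k < j"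
    then have "Suc k mod c = Suc k" "k < c" "Suc k < c - 1" using assms c_ge_3 by auto
    then show "{cyc w u k, cyc w u (Suc k)} \<in> deleted_E"
      using cyc_edge_in_glued_E[of k] cyc_ne_last[of k] cyc_ne_last[of "Suc k"]
      by (simp add: del_vertex_E_def)
  qed
  then show ?thesis by (simp add: cyc_def)
qed

lemma reachable_deleted: "y \<in> deleted_V \<Longrightarrow> reachable deleted_V deleted_E w y"
proof (cases "y \<in> V")
  case True
  with connected w_V have "reachable V E w y"
    unfolding connected_graph_def reachable_def by blast
  moreover have "V \<subseteq> deleted_V" using cyc_in_V_iff[of "c - 1"] cyc_last c_ge_3
    by (auto simp: glue_V_def)
  ultimately show ?thesis using E_subset_deleted_E by (rule reachable_mono)
next
  case False
  assume y: "y \<in> deleted_V"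
  with False obtain j where j: "j \<in> {1..<c}" "y = u j"
    by (auto simp: glue_V_def)
  moreover have "j \<noteq> c - 1" using j y by auto
  ultimately show ?thesis using reachable_deleted_cyc[of j] by (auto simp: cyc_def)
qed

text \<open>Only the edge \<open>{u (c - 1), w}\<close> changes the position by more than one, so in the graph
  without \<open>u (c - 1)\<close> the position is a lower bound for the distance from \<open>w\<close>.\<close>

definition position :: "'a \<Rightarrow> int" where
  "position x = (if x \<in> V then 0 else int (inv_into {1..<c} u x))"

lemma position_cyc:
  assumes "i < c"
  shows "position (cyc w u i) = int i"
proof (cases "i = 0")
  case True
  then show ?thesis using w_V by (simp add: position_def cyc_def)
next
  case False
  then have "i \<in> {1..<c}" using assms by simp
  then show ?thesis using u_notin_V inv_into_f_f[OF inj] by (simp add: position_def cyc_def False)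
qed

lemma position_deleted_edge:
  assumes ab: "{a, b} \<in> deleted_E"
  shows "\<bar>position a - position b\<bar> \<le> 1"
proof -
  consider "{a, b} \<in> E" | i where "i < c" "{a, b} = {cyc w u i, cyc w u (Suc i mod c)}"
    using ab unfolding del_vertex_E_def glue_E_def by blast
  then show ?thesis
  proof cases
    case 1
    then show ?thesis using edge_subset[OF 1] by (simp add: position_def)
  next
    case (2 i)
    have "i \<noteq> c - 1"
    proof
      assume "i = c - 1"
      then have "u (c - 1) \<in> {a, b}" using 2 cyc_last by simp
      then show False using ab by (simp add: del_vertex_E_def)
    qed
    with 2 have "Suc i < c" "{a, b} = {cyc w u i, cyc w u (Suc i)}" by auto
    then show ?thesis using position_cyc[of i] position_cyc[of "Suc i"]
      by (auto simp: doubleton_eq_iff)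
  qed
qed

lemma dist_deleted_cyc: "j < c - 1 \<Longrightarrow> dist deleted_V deleted_E w (cyc w u j) \<ge> j"
proof -
  assume j: "j < c - 1"
  then have "cyc w u j \<in> deleted_V" using cyc_in_glued_V cyc_ne_last by simp
  then have "\<bar>position (cyc w u j) - position w\<bar> \<le> int (dist deleted_V deleted_E w (cyc w u j))"
    by (intro dist_ge_potential[where f = position] reachable_deleted position_deleted_edge)
  moreover have "position (cyc w u j) = int j" "position w = 0"
    using position_cyc[of j] position_cyc[of 0] j by (simp_all add: cyc_def)
  ultimately show ?thesis by simp
qed

theorem transmission_delete_last_le:
  "int (transmission glued_V glued_E w)
     - int (transmission (del_vertex_V glued_V (u (c - 1))) deleted_E w) \<le> 5 - int c"
proof -
  let ?x = "cyc w u (c - 2)"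
  have "finite glued_V" using simple by (simp add: simple_graph_def glue_V_def)
  moreover have "u (c - 1) \<in> glued_V" using cyc_in_glued_V[of "c - 1"] cyc_last c_ge_3 by simp
  moreover have "?x \<in> glued_V" "?x \<noteq> u (c - 1)"
    using cyc_in_glued_V[of "c - 2"] cyc_ne_last[of "c - 2"] c_ge_3 by simp_all
  moreover have "deleted_E \<subseteq> glued_E" by (auto simp: del_vertex_E_def)
  ultimately have "int (transmission glued_V glued_E w) - int (transmission deleted_V deleted_E w)
      \<le> int (dist glued_V glued_E w (u (c - 1))) + int (dist glued_V glued_E w ?x)
         - int (dist deleted_V deleted_E w ?x)"
    using reachable_deleted by (rule transmission_delete_vertex_le)
  moreover have "dist glued_V glued_E w (u (c - 1)) \<le> 1" "dist glued_V glued_E w ?x \<le> 2"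
    using dist_glued_cyc[of "c - 1"] dist_glued_cyc[of "c - 2"] cyc_last c_ge_3 by auto
  moreover have "dist deleted_V deleted_E w ?x \<ge> c - 2" using dist_deleted_cyc c_ge_3 by simp
  ultimately have "int (transmission glued_V glued_E w) - int (transmission deleted_V deleted_E w)
      \<le> 5 - int c"
    using c_ge_3 by linarith
  then show ?thesis by (simp add: del_vertex_V_def)
qed

end

text \<open>Relabelling the cycle backwards swaps the two neighbours \<open>u 1\<close> and \<open>u (c - 1)\<close> of \<open>w\<close>,
  so it suffices to delete \<open>u (c - 1)\<close>.\<close>

lemma bij_betw_reverse_interval: "bij_betw (\<lambda>i. c - i) {1..<c} {1..<(c::nat)}"
  by (rule bij_betw_byWitness[where f' = "\<lambda>i. c - i"]) auto

lemma image_reverse_interval: "(\<lambda>i. u (c - i)) ` {1..<c} = u ` {1..<(c::nat)}"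
  using bij_betw_imp_surj_on[OF bij_betw_reverse_interval[of c]] by (metis image_image)

lemma inj_on_reverse_interval:
  assumes "inj_on u {1..<(c::nat)}"
  shows "inj_on (\<lambda>i. u (c - i)) {1..<c}"
proof -
  have "inj_on (u \<circ> (\<lambda>i. c - i)) {1..<c}"
    using assms bij_betw_imp_inj_on[OF bij_betw_reverse_interval[of c]]
      bij_betw_imp_surj_on[OF bij_betw_reverse_interval[of c]]
    by (intro comp_inj_on) simp_all
  then show ?thesis by (simp add: comp_def)
qed

lemma glue_V_reverse: "glue_V V (\<lambda>i. u (c - i)) c = glue_V V u c"
  unfolding glue_V_def image_reverse_interval ..

lemma cycle_edge_reverse:
  assumes "i < c"
  shows "{cyc w (\<lambda>j. u (c - j)) i, cyc w (\<lambda>j. u (c - j)) (Suc i mod c)}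
       = {cyc w u (c - 1 - i), cyc w u (Suc (c - 1 - i) mod c)}"
proof -
  have cyc_rev: "cyc w (\<lambda>j. u (c - j)) k = cyc w u ((c - k) mod c)" if "k < c" for k
    using that by (auto simp: cyc_def)
  have "(c - i) mod c = Suc (c - 1 - i) mod c" using assms by (simp add: Suc_diff_Suc)
  moreover have "(c - Suc i mod c) mod c = c - 1 - i"
    using assms by (cases "Suc i = c") auto
  ultimately show ?thesis using assms by (simp add: cyc_rev insert_commute)
qed

lemma glue_E_reverse: "glue_E E w (\<lambda>i. u (c - i)) c = glue_E E w u c"
proof -
  have "{{cyc w (\<lambda>j. u (c - j)) i, cyc w (\<lambda>j. u (c - j)) (Suc i mod c)} | i. i < c}
      = {{cyc w u i, cyc w u (Suc i mod c)} | i. i < c}" (is "?L = ?R")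
  proof
    show "?L \<subseteq> ?R" using cycle_edge_reverse by fastforce
    show "?R \<subseteq> ?L"
    proof
      fix e assume "e \<in> ?R"
      then obtain i where "i < c" "e = {cyc w u i, cyc w u (Suc i mod c)}" by blast
      then have "c - 1 - i < c" "e = {cyc w (\<lambda>j. u (c - j)) (c - 1 - i),
          cyc w (\<lambda>j. u (c - j)) (Suc (c - 1 - i) mod c)}"
        using cycle_edge_reverse[of "c - 1 - i" c w u] by auto
      then show "e \<in> ?L" by blast
    qed
  qed
  then show ?thesis unfolding glue_E_def by simp
qed

lemma glued_cycle_reverse:
  assumes "glued_cycle V E w u c"
  shows "glued_cycle V E w (\<lambda>i. u (c - i)) c"
  using assms inj_on_reverse_interval[of u c] image_reverse_interval[of u c]
  unfolding glued_cycle_def by simp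

theorem lemma2:
  fixes V :: "'a set" and E :: "'a set set" and w :: 'a
    and u :: "nat \<Rightarrow> 'a" and c :: nat and v1 :: 'a
  assumes "simple_graph V E" and "connected_graph V E" and "w \<in> V"
    and "c \<ge> 7"
    and "inj_on u {1..<c}" and "u ` {1..<c} \<inter> V = {}"
    and "v1 = u 1 \<or> v1 = u (c - 1)"
  shows "int (transmission (glue_V V u c) (glue_E E w u c) w)
         - int (transmission (del_vertex_V (glue_V V u c) v1) (del_vertex_E (glue_E E w u c) v1) w)
         \<le> -2"
proof -
  have G: "glued_cycle V E w u c" using assms(1-6) by unfold_locales simp_all
  from assms(7) show ?thesis
  proof
    assume "v1 = u 1"
    with glued_cycle.transmission_delete_last_le[OF glued_cycle_reverse[OF G]] assms(4)
    show ?thesis by (simp add: glue_V_reverse glue_E_reverse)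
  next
    assume "v1 = u (c - 1)"
    with glued_cycle.transmission_delete_last_le[OF G] assms(4) show ?thesis by simp
  qed
qed

end
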